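(* In the setting below, the vector $R=1\otimes e^{-\lambda_1+\lambda_6}+1\otimes e^{\lambda_3-\lambda_5}-1\otimes e^{\lambda_1-\lambda_3+\lambda_5-\lambda_6}\in V^{\Lambda_1}$ is a highest weight vector of type $Vir(\tfrac45,\tfrac23)\otimes W^{\Omega_0}$, i.e. it satisfies (HW1)–(HW5) with $h=2/3$ and $\omega_j=0$.
   Context: Setting. $Q$ is the $E_6$ root lattice with simple roots $\alpha_1,\dots,\alpha_6$ (Dynkin chain $\alpha_1-\alpha_3-\alpha_4-\alpha_5-\alpha_6$, $\alpha_2$ attached to $\alpha_4$), form from the Cartan matrix, fundamental weights $\lambda_i$, $P=\bigoplus\mathbb Z\lambda_i$, $\mathfrak h=\mathbb C\otimes P$. $\varepsilon$ bimultiplicative on $P$ with $[\varepsilon(\lambda_i,\lambda_j)]$ rows $(1,1,1,1,1,1)$, $(-1,1,1,1,1,-1)$, $(-1,1,1,1,1,1)$, $(1,-1,1,1,1,1)$, $(1,1,1,1,1,-1)$, $(1,1,1,1,1,1)$. $V_P=S(\hat{\mathfrak h}^-)\otimes\mathbb C[P]$ with Heisenberg operators $h(n)$ ($[h(m),h'(n)]=m\langle h,h'\rangle\delta_{m+n,0}$, $h(n)1=0$ for $n>0$, $h(0)(u\otimes e^\beta)=\langle h,\beta\rangle u\otimes e^\beta$). For $\alpha\in Q$, acting on $V_P$: $Y(1\otimes e^\alpha,z)=\exp(\sum_{k\ge1}\frac{\alpha(-k)}kz^k)\exp(-\sum_{k\ge1}\frac{\alpha(k)}kz^{-k})e_\alpha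 z^{\alpha(0)}=\sum_n\{1\otimes e^\alpha\}_nz^{-n-1}$, $e_\alpha(u\otimes e^\beta)=\varepsilon(\alpha,\beta)u\otimes e^{\alpha+\beta}$, $z^{\alpha(0)}(u\otimes e^\beta)=z^{\langle\alpha,\beta\rangle}u\otimes e^\beta$; $Y(h_1(-1)\cdots h_k(-1)\otimes e^\alpha,z)=\,:h_1(z)\cdots h_k(z)Y(1\otimes e^\alpha,z):$, $h(z)=\sum_nh(n)z^{-n-1}$. $V^{\Lambda_1}$ is spanned by $S(\hat{\mathfrak h}^-)\otimes e^\nu$, $\nu\in\lambda_1+Q$. $\tau$: $\alpha_1\leftrightarrow\alpha_6$, $\alpha_3\leftrightarrow\alpha_5$ ($\lambda_1\leftrightarrow\lambda_6$, $\lambda_3\leftrightarrow\lambda_5$); $\mathrm{Proj}(\nu)=(\nu+\tau\nu)/2$. $\theta=\alpha_1+2\alpha_2+2\alpha_3+3\alpha_4+2\alpha_5+\alpha_6$. Raising operators of $\tilde{\mathfrak a}$ ($F_4^{(1)}$): $\{\beta_1\}_0=\{1\otimes e^{\alpha_2}\}_0$, $\{\beta_2\}_0=\{1\otimes e^{\alpha_4}\}_0$, $\{\beta_3\}_0=\{1\otimes e^{\alpha_3}\}_0+\{1\otimes e^{\alpha_5}\}_0$, $\{\beta_4\}_0=\{1\otimes e^{\alpha_1}\}_0+\{1\otimes e^{\alpha_6}\}_0$, $\{1\otimes e^{-\theta}\}_1$. Coset conformal vector $\omega=\frac1{10}[(-\lambda_1+\lambda_6)(-1)^2+(\lambda_3-\lambda_5)(-1)^2+(\lambda_1-\lambda_3+\lambda_5-\lambda_6)(-1)^2]\otimes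 e^0+\frac15(-1\otimes e^{\pm\gamma_1}-1\otimes e^{\pm\gamma_2}+1\otimes e^{\pm\gamma_3})$, $\gamma_1=\alpha_1-\alpha_6$, $\gamma_2=\alpha_3-\alpha_5$, $\gamma_3=\gamma_1+\gamma_2$, $1\otimes e^{\pm\gamma}:=1\otimes e^\gamma+1\otimes e^{-\gamma}$; $L(n)=\{\omega\}_{n+1}$ on $V_P$ (Virasoro, $c=4/5$, commuting with $\tilde{\mathfrak a}$). $\Omega_0$ is the basic level one $F_4^{(1)}$ weight and $W^{\Omega_0}$ its irreducible module. A nonzero $v$ is a highest weight vector of type $Vir(\frac45,h)\otimes W^{\Omega_j}$ if (HW1) $\{1\otimes e^{-\theta}\}_1v=0$; (HW2) $\{\beta_i\}_0v=0$, $i=1,\dots,4$; (HW3) $L(1)v=L(2)v=0$; (HW4) $L(0)v=hv$; (HW5) $v\in\bigoplus_kS(\hat{\mathfrak h}^-)\otimes e^{\nu_k}$ with $\mathrm{Proj}(\nu_k)=\omega_j$ ($\omega_0=0$). *)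

theory Defs
  imports Complex_Main "HOL-Library.Multiset" "HOL-Library.Function_Algebras"
begin

datatype idx = I1 | I2 | I3 | I4 | I5 | I6

lemma UNIV_idx: "(UNIV :: idx set) = {I1,I2,I3,I4,I5,I6}"
  using idx.exhaust by auto

instance idx :: finite
  by standard (simp add: UNIV_idx)

text \<open>Conventions.
  wt : elements of P, in coordinates w.r.t. the fundamental weights lambda_i.
  rt : elements of Q, in coordinates w.r.t. the simple roots alpha_i.
  hv : elements of h = C (x) P, in coordinates w.r.t. the basis alpha_1..alpha_6.
  A basis vector of V_P = S(h^-) (x) C[P] is (M, beta) where M is a monomial in the
  Heisenberg generators a_i(-n) := alpha_i(-n) (n >= 1), encoded as the multiset of
  pairs (i, n), and beta is in P.  Vectors are functions basis => complex
  (finitely supported ones are the actual elements of V_P).\<close>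

type_synonym wt = "idx \<Rightarrow> int"
type_synonym rt = "idx \<Rightarrow> int"
type_synonym hv = "idx \<Rightarrow> complex"
type_synonym mono = "(idx \<times> nat) multiset"
type_synonym basis = "mono \<times> wt"
type_synonym vec = "basis \<Rightarrow> complex"

definition mk6 :: "'a \<Rightarrow> 'a \<Rightarrow> 'a \<Rightarrow> 'a \<Rightarrow> 'a \<Rightarrow> 'a \<Rightarrow> idx \<Rightarrow> 'a" where
  "mk6 a b c d e f = (\<lambda>k. case k of I1 \<Rightarrow> a | I2 \<Rightarrow> b | I3 \<Rightarrow> c | I4 \<Rightarrow> d | I5 \<Rightarrow> e | I6 \<Rightarrow> f)"

text \<open>Cartan matrix of E6: chain 1-3-4-5-6, node 2 attached to node 4.\<close>
definition cartan :: "idx \<Rightarrow> idx \<Rightarrow> int" where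
  "cartan i j = (if i = j then 2
     else if (i,j) \<in> {(I1,I3),(I3,I1),(I3,I4),(I4,I3),(I4,I5),(I5,I4),(I5,I6),(I6,I5),(I2,I4),(I4,I2)}
     then -1 else 0)"

definition form :: "hv \<Rightarrow> hv \<Rightarrow> complex" where
  "form h h' = (\<Sum>i\<in>UNIV. \<Sum>j\<in>UNIV. h i * of_int (cartan i j) * h' j)"

definition sroot :: "idx \<Rightarrow> rt" where
  "sroot j = (\<lambda>i. if i = j then 1 else 0)"

definition root_h :: "rt \<Rightarrow> hv" where
  "root_h a = (\<lambda>i. of_int (a i))"

text \<open>Fundamental weights written in the alpha-basis of h (inverse Cartan matrix).\<close>
definition fund :: "idx \<Rightarrow> hv" where
  "fund i = (case i of
      I1 \<Rightarrow> mk6 (4/3) 1 (5/3) 2 (4/3) (2/3)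
    | I2 \<Rightarrow> mk6 1 2 2 3 2 1
    | I3 \<Rightarrow> mk6 (5/3) 2 (10/3) 4 (8/3) (4/3)
    | I4 \<Rightarrow> mk6 2 3 4 6 4 2
    | I5 \<Rightarrow> mk6 (4/3) 2 (8/3) 4 (10/3) (5/3)
    | I6 \<Rightarrow> mk6 (2/3) 1 (4/3) 2 (5/3) (4/3))"

lemma fund_dual: "form (root_h (sroot j)) (fund i) = (if i = j then 1 else 0)"
  by (cases i; cases j; simp add: form_def root_h_def sroot_def fund_def mk6_def
      cartan_def UNIV_idx)

definition lw :: "idx \<Rightarrow> wt" where
  "lw i = (\<lambda>j. if j = i then 1 else 0)"

definition wt_h :: "wt \<Rightarrow> hv" where
  "wt_h \<nu> = (\<lambda>k. \<Sum>i\<in>UNIV. of_int (\<nu> i) * fund i k)"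

definition root_wt :: "rt \<Rightarrow> wt" where
  "root_wt a = (\<lambda>j. \<Sum>i\<in>UNIV. a i * cartan i j)"

definition hpair :: "hv \<Rightarrow> wt \<Rightarrow> complex" where
  "hpair h \<beta> = (\<Sum>i\<in>UNIV. h i * of_int (\<beta> i))"

definition rpair :: "rt \<Rightarrow> wt \<Rightarrow> int" where
  "rpair a \<beta> = (\<Sum>i\<in>UNIV. a i * \<beta> i)"

text \<open>The bimultiplicative sign eps, determined by its values on fundamental weights.\<close>
definition epsE :: "idx \<Rightarrow> idx \<Rightarrow> bool" where
  "epsE i j \<longleftrightarrow> (i,j) \<in> {(I2,I1),(I2,I6),(I3,I1),(I4,I2),(I5,I6)}"

definition eps :: "wt \<Rightarrow> wt \<Rightarrow> complex" where
  "eps \<nu> \<mu> = (-1) ^ nat ((\<Sum>i\<in>UNIV. \<Sum>j\<in>UNIV. if epsE i j then \<nu> i * \<mu> j else 0) mod 2)"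

definition single :: "basis \<Rightarrow> vec" where
  "single b = (\<lambda>b'. if b' = b then 1 else 0)"

definition smul :: "complex \<Rightarrow> vec \<Rightarrow> vec" where
  "smul c v = (\<lambda>b. c * v b)"

text \<open>Linear extension of an operator given on basis vectors (correct on finitely supported vectors).\<close>
definition lin :: "(basis \<Rightarrow> vec) \<Rightarrow> vec \<Rightarrow> vec" where
  "lin f v = (\<lambda>b'. \<Sum>b\<in>{b. v b \<noteq> 0}. v b * f b b')"

definition heis_b :: "hv \<Rightarrow> int \<Rightarrow> basis \<Rightarrow> vec" where
  "heis_b h n b = (case b of (M, \<beta>) \<Rightarrow>
     if n < 0 then (\<lambda>b'. \<Sum>i\<in>UNIV. h i * single (M + {#(i, nat (-n))#}, \<beta>) b')
     else if n = 0 then smul (hpair h \<beta>) (single (M, \<beta>))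
     else (\<lambda>b'. \<Sum>j\<in>UNIV. of_nat (count M (j, nat n)) * of_int n * form h (root_h (sroot j))
                       * single (M - {#(j, nat n)#}, \<beta>) b'))"

definition heis :: "hv \<Rightarrow> int \<Rightarrow> vec \<Rightarrow> vec" where
  "heis h n = lin (heis_b h n)"

text \<open>Coefficient of z^p in exp(sum_{k>=1} A_k z^k / k), for commuting operators A_k,
  via  p E_p = sum_{k=1}^p A_k E_{p-k}.\<close>
function expc :: "(nat \<Rightarrow> vec \<Rightarrow> vec) \<Rightarrow> nat \<Rightarrow> vec \<Rightarrow> vec" where
  "expc A 0 v = v"
| "expc A (Suc p) v =
     smul (1 / of_nat (Suc p)) (\<lambda>b. \<Sum>k\<in>{1..Suc p}. A k (expc A (Suc p - k) v) b)"
  by pat_completeness auto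
termination by (relation "measure (\<lambda>(A,p,v). p)") auto

text \<open>E^-(alpha,z) = exp(sum alpha(-k) z^k / k) and
      E^+(alpha,z) = exp(- sum alpha(k) z^(-k) / k): coefficients of z^p resp. z^(-q).\<close>
definition Em :: "rt \<Rightarrow> nat \<Rightarrow> vec \<Rightarrow> vec" where
  "Em a = expc (\<lambda>k. heis (root_h a) (- int k))"

definition Ep :: "rt \<Rightarrow> nat \<Rightarrow> vec \<Rightarrow> vec" where
  "Ep a = expc (\<lambda>k v. smul (-1) (heis (root_h a) (int k) v))"

text \<open>Coefficient of z^m in Y(1 (x) e^alpha, z) applied to a basis vector.\<close>
definition Yexp_b :: "rt \<Rightarrow> int \<Rightarrow> basis \<Rightarrow> vec" where
  "Yexp_b a m b = (case b of (M, \<beta>) \<Rightarrow>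
     (let c = rpair a \<beta>;
          T = (\<lambda>q::nat. smul (eps (root_wt a) \<beta>)
                 (Em a (nat (m - c + int q)) (Ep a q (single (M, root_wt a + \<beta>)))))
      in (\<lambda>b'. \<Sum>q\<in>{q. m - c + int q \<ge> 0 \<and> T q \<noteq> 0}. T q b')))"

text \<open>The mode {1 (x) e^alpha}_n, i.e. coefficient of z^(-n-1).\<close>
definition Yc :: "rt \<Rightarrow> int \<Rightarrow> vec \<Rightarrow> vec" where
  "Yc a n = lin (Yexp_b a (- n - 1))"

definition nord :: "hv \<Rightarrow> int \<Rightarrow> hv \<Rightarrow> int \<Rightarrow> vec \<Rightarrow> vec" where
  "nord h m h' n v = (if 0 \<le> m \<and> n < 0 then heis h' n (heis h m v) else heis h m (heis h' n v))"

text \<open>The mode {h(-1)h'(-1) (x) e^0}_N = sum_{m+n=N-1} :h(m)h'(n): .\<close>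
definition Yhh_b :: "hv \<Rightarrow> hv \<Rightarrow> int \<Rightarrow> basis \<Rightarrow> vec" where
  "Yhh_b h h' N b = (\<lambda>b'. \<Sum>m\<in>{m. nord h m h' (N - 1 - m) (single b) \<noteq> 0}.
                              nord h m h' (N - 1 - m) (single b) b')"

definition Yhh :: "hv \<Rightarrow> hv \<Rightarrow> int \<Rightarrow> vec \<Rightarrow> vec" where
  "Yhh h h' N = lin (Yhh_b h h' N)"

definition gam1 :: rt where "gam1 = sroot I1 - sroot I6"
definition gam2 :: rt where "gam2 = sroot I3 - sroot I5"
definition gam3 :: rt where "gam3 = gam1 + gam2"

definition theta :: rt where
  "theta = mk6 1 2 2 3 2 1"

text \<open>L(n) = {omega}_{n+1} for the coset conformal vector omega.\<close>
definition Lop :: "int \<Rightarrow> vec \<Rightarrow> vec" where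
  "Lop n v =
    (let h1 = wt_h (lw I6 - lw I1); h2 = wt_h (lw I3 - lw I5);
         h3 = wt_h (lw I1 - lw I3 + lw I5 - lw I6); k = n + 1
     in smul (1/10) (Yhh h1 h1 k v + Yhh h2 h2 k v + Yhh h3 h3 k v)
      + smul (1/5) (- (Yc gam1 k v + Yc (- gam1) k v)
                    - (Yc gam2 k v + Yc (- gam2) k v)
                    + (Yc gam3 k v + Yc (- gam3) k v)))"

definition raise1 :: "vec \<Rightarrow> vec" where "raise1 v = Yc (sroot I2) 0 v"
definition raise2 :: "vec \<Rightarrow> vec" where "raise2 v = Yc (sroot I4) 0 v"
definition raise3 :: "vec \<Rightarrow> vec" where "raise3 v = Yc (sroot I3) 0 v + Yc (sroot I5) 0 v"
definition raise4 :: "vec \<Rightarrow> vec" where "raise4 v = Yc (sroot I1) 0 v + Yc (sroot I6) 0 v"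

definition tau :: "idx \<Rightarrow> idx" where
  "tau i = (case i of I1 \<Rightarrow> I6 | I6 \<Rightarrow> I1 | I3 \<Rightarrow> I5 | I5 \<Rightarrow> I3 | _ \<Rightarrow> i)"

definition proj :: "wt \<Rightarrow> idx \<Rightarrow> rat" where
  "proj \<nu> = (\<lambda>i. (of_int (\<nu> i) + of_int (\<nu> (tau i))) / 2)"

definition in_VLambda1 :: "vec \<Rightarrow> bool" where
  "in_VLambda1 v \<longleftrightarrow> finite {b. v b \<noteq> 0} \<and>
     (\<forall>b. v b \<noteq> 0 \<longrightarrow> (\<exists>a::rt. snd b = lw I1 + root_wt a))"

definition hw_vector :: "complex \<Rightarrow> (idx \<Rightarrow> rat) \<Rightarrow> vec \<Rightarrow> bool" where
  "hw_vector h \<omega>j v \<longleftrightarrow>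
     v \<noteq> 0 \<and> finite {b. v b \<noteq> 0}
   \<and> Yc (- theta) 1 v = 0
   \<and> raise1 v = 0 \<and> raise2 v = 0 \<and> raise3 v = 0 \<and> raise4 v = 0
   \<and> Lop 1 v = 0 \<and> Lop 2 v = 0
   \<and> Lop 0 v = smul h v
   \<and> (\<forall>b. v b \<noteq> 0 \<longrightarrow> proj (snd b) = \<omega>j)"

definition Rvec :: vec where
  "Rvec = single ({#}, lw I6 - lw I1) + single ({#}, lw I3 - lw I5)
          - single ({#}, lw I1 - lw I3 + lw I5 - lw I6)"

end

theory Submission
  imports Defs
begin

text \<open>
  On a vacuum vector the annihilation factor E^+ of a vertex operator acts trivially, so
  the mode {1 (x) e^alpha}_n kills 1 (x) e^beta when -n-1 < <alpha,beta> and sends it to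
  eps(alpha,beta) 1 (x) e^(alpha+beta) when -n-1 = <alpha,beta>; likewise the quadratic
  Heisenberg modes only contribute through h(0)h'(0). Hence (HW1)--(HW4) become finite
  computations with pairings and signs: the raising operators, L(1) and L(2) kill each of
  the three vectors or cancel between them, and L(0) acts on their span by a matrix with
  eigenvector R for the eigenvalue 2/3. Each of the three weights is mapped to its
  negative by tau, which gives (HW5).
\<close>

lemma sum_UNIV_idx: "sum f (UNIV::idx set) = f I1 + f I2 + f I3 + f I4 + f I5 + f I6"
  by (simp add: UNIV_idx add.assoc)

lemma all_idx: "(\<forall>x::idx. P x) \<longleftrightarrow> P I1 \<and> P I2 \<and> P I3 \<and> P I4 \<and> P I5 \<and> P I6"
  by (metis idx.exhaust)

lemma mk6_eq_iff: "mk6 a b c d e f = mk6 a' b' c' d' e' f' \<longleftrightarrow>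
   a = a' \<and> b = b' \<and> c = c' \<and> d = d' \<and> e = e' \<and> f = f'"
  by (auto simp: mk6_def fun_eq_iff all_idx)

lemma mk6_add:
  "mk6 a b c d e f + mk6 a' b' c' d' e' f' = mk6 (a+a') (b+b') (c+c') (d+d') (e+e') (f+f')"
  by (auto simp: mk6_def fun_eq_iff split: idx.splits)

lemma mk6_diff:
  "mk6 a b c d e f - mk6 a' b' c' d' e' f' = mk6 (a-a') (b-b') (c-c') (d-d') (e-e') (f-f')"
  by (auto simp: mk6_def fun_eq_iff split: idx.splits)

lemma mk6_uminus: "- mk6 a b c d e f = mk6 (-a) (-b) (-c) (-d) (-e) (-f)"
  by (auto simp: mk6_def fun_eq_iff split: idx.splits)

lemma mk6_apply:
  "mk6 a b c d e f I1 = a" "mk6 a b c d e f I2 = b" "mk6 a b c d e f I3 = c"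
  "mk6 a b c d e f I4 = d" "mk6 a b c d e f I5 = e" "mk6 a b c d e f I6 = f"
  by (simp_all add: mk6_def)

lemma lw_mk6:
  "lw I1 = mk6 1 0 0 0 0 0" "lw I2 = mk6 0 1 0 0 0 0" "lw I3 = mk6 0 0 1 0 0 0"
  "lw I4 = mk6 0 0 0 1 0 0" "lw I5 = mk6 0 0 0 0 1 0" "lw I6 = mk6 0 0 0 0 0 1"
  by (auto simp: lw_def mk6_def fun_eq_iff split: idx.splits)

lemma sroot_mk6:
  "sroot I1 = mk6 1 0 0 0 0 0" "sroot I2 = mk6 0 1 0 0 0 0" "sroot I3 = mk6 0 0 1 0 0 0"
  "sroot I4 = mk6 0 0 0 1 0 0" "sroot I5 = mk6 0 0 0 0 1 0" "sroot I6 = mk6 0 0 0 0 0 1"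
  by (auto simp: sroot_def mk6_def fun_eq_iff split: idx.splits)

lemma root_wt_mk6: "root_wt (mk6 a b c d e f) =
  mk6 (2*a - c) (2*b - d) (2*c - a - d) (2*d - b - c - e) (2*e - d - f) (2*f - e)"
  by (auto simp: root_wt_def mk6_def fun_eq_iff sum_UNIV_idx cartan_def split: idx.splits)

lemma rpair_mk6:
  "rpair (mk6 a b c d e f) (mk6 a' b' c' d' e' f') = a*a' + b*b' + c*c' + d*d' + e*e' + f*f'"
  by (simp add: rpair_def sum_UNIV_idx mk6_apply)

lemma eps_mk6: "eps (mk6 a b c d e f) (mk6 a' b' c' d' e' f') =
   (-1) ^ nat ((b*a' + b*f' + c*a' + d*b' + e*f') mod 2)"
  by (simp add: eps_def sum_UNIV_idx epsE_def mk6_apply algebra_simps)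

lemma eps_nonzero: "eps \<nu> \<mu> \<noteq> 0"
  by (simp add: eps_def)

text \<open>The coefficients are the entries of the inverse Cartan matrix, cf. \<open>fund\<close>.\<close>
lemma hpair_wt_h_mk6: "hpair (wt_h (mk6 a b c d e f)) (mk6 a' b' c' d' e' f') =
    of_int a * (4/3*a' + b' + 5/3*c' + 2*d' + 4/3*e' + 2/3*f')
  + of_int b * (a' + 2*b' + 2*c' + 3*d' + 2*e' + f')
  + of_int c * (5/3*a' + 2*b' + 10/3*c' + 4*d' + 8/3*e' + 4/3*f')
  + of_int d * (2*a' + 3*b' + 4*c' + 6*d' + 4*e' + 2*f')
  + of_int e * (4/3*a' + 2*b' + 8/3*c' + 4*d' + 10/3*e' + 5/3*f')
  + of_int f * (2/3*a' + b' + 4/3*c' + 2*d' + 5/3*e' + 4/3*f')"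
  by (simp add: hpair_def wt_h_def sum_UNIV_idx fund_def mk6_apply algebra_simps)

lemma lin_eq_sum_superset:
  assumes "finite S" "{b. v b \<noteq> 0} \<subseteq> S"
  shows "lin f v = (\<lambda>b'. \<Sum>b\<in>S. v b * f b b')"
proof
  fix b'
  show "lin f v b' = (\<Sum>b\<in>S. v b * f b b')"
    unfolding lin_def by (rule sum.mono_neutral_left) (use assms in auto)
qed

lemma lin_zero: "lin f 0 = 0"
  by (simp add: lin_def fun_eq_iff)

lemma lin_single: "lin f (single b) = f b"
  by (subst lin_eq_sum_superset[of "{b}"]) (auto simp: single_def)

lemma lin_smul_single: "lin f (smul c (single b)) = smul c (f b)"
  by (subst lin_eq_sum_superset[of "{b}"]) (auto simp: single_def smul_def fun_eq_iff)

lemma smul_zero [simp]: "smul c 0 = 0"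
  by (simp add: smul_def fun_eq_iff)

lemma support_single_add_single_diff_single:
  assumes "distinct [b1, b2, b3]"
  shows "{b. (single b1 + single b2 - single b3) b \<noteq> 0} = {b1, b2, b3}"
  using assms by (auto simp: single_def)

lemma lin_single_add_single_diff_single:
  assumes "distinct [b1, b2, b3]"
  shows "lin f (single b1 + single b2 - single b3) = (\<lambda>b'. f b1 b' + f b2 b' - f b3 b')"
  using assms
  by (subst lin_eq_sum_superset[of "{b1, b2, b3}"])
     (auto simp: support_single_add_single_diff_single single_def algebra_simps)

lemma heis_zero [simp]: "heis h n 0 = 0"
  by (simp add: heis_def lin_zero)

lemma heis_pos_smul_vacuum: "n > 0 \<Longrightarrow> heis h n (smul c (single ({#}, \<beta>))) = 0"
  unfolding heis_def lin_smul_single by (simp add: heis_b_def fun_eq_iff smul_def)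

lemma heis_pos_vacuum: "n > 0 \<Longrightarrow> heis h n (single ({#}, \<beta>)) = 0"
  by (simp add: heis_def lin_single heis_b_def fun_eq_iff)

lemma heis_0_smul_vacuum:
  "heis h 0 (smul c (single ({#}, \<beta>))) = smul (c * hpair h \<beta>) (single ({#}, \<beta>))"
  unfolding heis_def lin_smul_single by (simp add: heis_b_def smul_def fun_eq_iff)

lemma heis_0_vacuum: "heis h 0 (single ({#}, \<beta>)) = smul (hpair h \<beta>) (single ({#}, \<beta>))"
  by (simp add: heis_def lin_single heis_b_def)

lemma expc_sum_vanishes:
  assumes "\<And>k. k \<in> {1..Suc p} \<Longrightarrow> A k (expc A (Suc p - k) v) = 0"
  shows "expc A (Suc p) v = 0"
proof -
  have "\<And>b. (\<Sum>k\<in>{1..Suc p}. A k (expc A (Suc p - k) v) b) = 0"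
    using assms by (intro sum.neutral) simp
  then show ?thesis
    by (simp only: expc.simps) (simp add: smul_def fun_eq_iff)
qed

lemma expc_zero:
  assumes "\<And>k. A k 0 = 0"
  shows "expc A p 0 = 0"
proof (induction p rule: less_induct)
  case (less p)
  show ?case
  proof (cases p)
    case (Suc q)
    show ?thesis
      unfolding Suc
    proof (rule expc_sum_vanishes)
      fix k assume "k \<in> {1..Suc q}"
      then have "expc A (Suc q - k) 0 = 0"
        using Suc by (intro less.IH) auto
      then show "A k (expc A (Suc q - k) 0) = 0"
        using assms by simp
    qed
  qed simp
qed

lemma expc_annihilated:
  assumes "\<And>k. A k 0 = 0" and "\<And>k. k \<ge> 1 \<Longrightarrow> A k v = 0" and "p \<ge> 1"
  shows "expc A p v = 0"
  using \<open>p \<ge> 1\<close>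
proof (induction p rule: less_induct)
  case (less p)
  then obtain q where p: "p = Suc q"
    by (cases p) auto
  show ?case
    unfolding p
  proof (rule expc_sum_vanishes)
    fix k assume k: "k \<in> {1..Suc q}"
    show "A k (expc A (Suc q - k) v) = 0"
    proof (cases "Suc q - k = 0")
      case False
      then have "expc A (Suc q - k) v = 0"
        using less.IH p k by auto
      then show ?thesis
        using assms(1) by simp
    qed (use k assms(2) in simp)
  qed
qed

lemma Ep_vacuum: "q \<ge> 1 \<Longrightarrow> Ep a q (single ({#}, \<beta>)) = 0"
  unfolding Ep_def by (rule expc_annihilated) (auto simp: heis_pos_vacuum)

lemma Em_zero: "Em a p 0 = 0"
  unfolding Em_def by (rule expc_zero) simp

lemma Yexp_b_vacuum:
  assumes "m \<le> rpair a \<beta>"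
  shows "Yexp_b a m ({#}, \<beta>) =
    (if m = rpair a \<beta> then smul (eps (root_wt a) \<beta>) (single ({#}, root_wt a + \<beta>)) else 0)"
proof -
  define c where "c = rpair a \<beta>"
  define T where "T = (\<lambda>q::nat. smul (eps (root_wt a) \<beta>)
                 (Em a (nat (m - c + int q)) (Ep a q (single ({#}, root_wt a + \<beta>)))))"
  have T_pos: "q \<ge> 1 \<Longrightarrow> T q = 0" for q
    by (simp add: T_def Ep_vacuum Em_zero)
  have T_0: "T 0 = smul (eps (root_wt a) \<beta>) (single ({#}, root_wt a + \<beta>))" if "m = c"
    using that by (simp add: T_def Em_def Ep_def)
  have "T 0 ({#}, root_wt a + \<beta>) \<noteq> 0" if "m = c"
    using that eps_nonzero by (simp add: T_0 smul_def single_def)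
  then have support: "{q. m - c + int q \<ge> 0 \<and> T q \<noteq> 0} = (if m = c then {0} else {})"
    using assms T_pos unfolding c_def[symmetric] by (auto simp: not_less_eq_eq)
  have "Yexp_b a m ({#}, \<beta>) = (\<lambda>b'. \<Sum>q\<in>{q. m - c + int q \<ge> 0 \<and> T q \<noteq> 0}. T q b')"
    by (simp add: Yexp_b_def c_def T_def Let_def)
  then show ?thesis
    unfolding support c_def[symmetric] using T_0 by (auto simp: fun_eq_iff)
qed

lemma nord_vacuum:
  assumes "N \<ge> 1"
  shows "nord h m h' (N - 1 - m) (single ({#}, \<beta>)) =
    (if m = 0 \<and> N = 1 then smul (hpair h \<beta> * hpair h' \<beta>) (single ({#}, \<beta>)) else 0)"
proof (cases m "0::int" rule: linorder_cases)
  case less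
  then show ?thesis
    using assms by (auto simp: nord_def heis_pos_vacuum)
next
  case equal
  then show ?thesis
    using assms
    by (cases "N = 1") (auto simp: nord_def heis_pos_vacuum heis_0_vacuum heis_0_smul_vacuum
        mult.commute)
next
  case greater
  then show ?thesis
    using assms
    by (cases "N - 1 - m = 0") (auto simp: nord_def heis_pos_vacuum heis_pos_smul_vacuum
        heis_0_vacuum)
qed

lemma Yhh_b_vacuum:
  assumes "N \<ge> 1"
  shows "Yhh_b h h' N ({#}, \<beta>) =
    (if N = 1 then smul (hpair h \<beta> * hpair h' \<beta>) (single ({#}, \<beta>)) else 0)"
proof -
  let ?u = "smul (hpair h \<beta> * hpair h' \<beta>) (single ({#}, \<beta>))"
  have "{m. nord h m h' (N - 1 - m) (single ({#}, \<beta>)) \<noteq> 0} =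
      (if N = 1 \<and> ?u \<noteq> 0 then {0} else {})"
    by (auto simp: nord_vacuum[OF assms])
  then show ?thesis
    by (auto simp: Yhh_b_def nord_vacuum[OF assms] fun_eq_iff)
qed

definition R_weight1 :: wt where "R_weight1 = mk6 (-1) 0 0 0 0 1"
definition R_weight2 :: wt where "R_weight2 = mk6 0 0 1 0 (-1) 0"
definition R_weight3 :: wt where "R_weight3 = mk6 1 0 (-1) 0 1 (-1)"

lemma R_basis_distinct: "distinct [({#}, R_weight1), ({#}, R_weight2), ({#}, R_weight3)]"
  by (simp add: R_weight1_def R_weight2_def R_weight3_def mk6_eq_iff)

lemma Rvec_eq:
  "Rvec = single ({#}, R_weight1) + single ({#}, R_weight2) - single ({#}, R_weight3)"
  by (simp add: Rvec_def R_weight1_def R_weight2_def R_weight3_def lw_mk6 mk6_diff mk6_add)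

lemma support_Rvec: "{b. Rvec b \<noteq> 0} = {({#}, R_weight1), ({#}, R_weight2), ({#}, R_weight3)}"
  unfolding Rvec_eq by (rule support_single_add_single_diff_single[OF R_basis_distinct])

lemma lin_Rvec: "lin f Rvec =
    (\<lambda>b'. f ({#}, R_weight1) b' + f ({#}, R_weight2) b' - f ({#}, R_weight3) b')"
  unfolding Rvec_eq by (rule lin_single_add_single_diff_single[OF R_basis_distinct])

lemma Rvec_nonzero: "Rvec \<noteq> 0"
  using support_Rvec by auto

lemma Rvec_in_VLambda1: "in_VLambda1 Rvec"
proof -
  have "R_weight1 = lw I1 + root_wt (mk6 (-2) (-1) (-2) (-2) (-1) 0)"
       "R_weight2 = lw I1 + root_wt (mk6 (-1) (-1) (-1) (-2) (-2) (-1))"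
       "R_weight3 = lw I1 + root_wt (mk6 (-1) (-1) (-2) (-2) (-1) (-1))"
    by (simp_all add: R_weight1_def R_weight2_def R_weight3_def lw_mk6 root_wt_mk6 mk6_add)
  then show ?thesis
    unfolding in_VLambda1_def support_Rvec
    using support_Rvec[THEN equalityD1, THEN subsetD] by fastforce
qed

lemma proj_support_Rvec: "Rvec b \<noteq> 0 \<Longrightarrow> proj (snd b) = (\<lambda>_. 0)"
  using support_Rvec[THEN equalityD1, THEN subsetD, of b]
  by (auto simp: R_weight1_def R_weight2_def R_weight3_def proj_def tau_def fun_eq_iff all_idx
      mk6_apply)

lemmas Rvec_computation_simps =
  Yc_def Yhh_def lin_Rvec R_weight1_def R_weight2_def R_weight3_def Yexp_b_vacuum Yhh_b_vacuum
  sroot_mk6 lw_mk6 mk6_diff mk6_add mk6_uminus root_wt_mk6 rpair_mk6 eps_mk6 mk6_eq_iff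
  smul_def single_def fun_eq_iff

lemma theta_mode_Rvec: "Yc (- theta) 1 Rvec = 0"
  by (simp add: theta_def Rvec_computation_simps)

lemma raising_Rvec: "raise1 Rvec = 0" "raise2 Rvec = 0" "raise3 Rvec = 0" "raise4 Rvec = 0"
  by (simp_all add: raise1_def raise2_def raise3_def raise4_def Rvec_computation_simps)

lemma Lop_positive_Rvec: "Lop 1 Rvec = 0" "Lop 2 Rvec = 0"
  by (simp_all add: Lop_def gam1_def gam2_def gam3_def Rvec_computation_simps)

lemma Lop_0_Rvec: "Lop 0 Rvec = smul (2/3) Rvec"
proof -
  have "smul (2/3) Rvec = (\<lambda>b. 2/3 * (single ({#}, R_weight1) b + single ({#}, R_weight2) b
                                       - single ({#}, R_weight3) b))"
    by (simp add: Rvec_eq smul_def)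
  then show ?thesis
    by (simp add: Lop_def gam1_def gam2_def gam3_def Rvec_computation_simps hpair_wt_h_mk6)
qed

theorem lemma6p15:
  shows "in_VLambda1 Rvec \<and> hw_vector (2/3) (\<lambda>_. 0) Rvec"
  unfolding hw_vector_def
  using Rvec_in_VLambda1 Rvec_nonzero theta_mode_Rvec raising_Rvec Lop_positive_Rvec
    Lop_0_Rvec proj_support_Rvec support_Rvec
  by simp

end
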